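(* Let $u_1\ge u_2\ge\cdots\ge u_a\ge 0$ and $w_1\ge w_2\ge\cdots\ge w_b\ge 0$ be two finite non-increasing lists (the unallocated item values and the witness item values), and set $w_r:=0$ for $r>b$. Suppose $u_r\ge w_r$ for all $r\le a$. Let $T\subseteq\{1,\dots,a\}$ and $X\subseteq\{1,\dots,b\}$ be sets of positions, and suppose there is an injective map $f:T\to X$ with $f(t)\le t$ for every $t\in T$. Delete the entries at positions in $T$ from the $u$-list and the entries at positions in $X$ from the $w$-list, and re-index the remaining entries in non-increasing order as $u'_1\ge\cdots\ge u'_{a-|T|}$ and $w'_1\ge\cdots\ge w'_{b-|X|}$ (again with $w'_r:=0$ beyond the end). Then $u'_r\ge w'_r$ for all $r\le a-|T|$.
   Context: In the paper's terminology: $U$ is the set of unallocated items and $W$ the set of items of a witness allocation; $W$ is a witness (for agent $i$) if the $r$-th largest value in $W$ is at most the $r$-th largest value in $U$ for all $r\le|U|$. Given a bundle $T$ allocated from $U$, a bundle $X\subseteq W$ is a dominance bundle for $T$ if there is an injection $f:T\to X$ such that the rank of $f(u)$ in $W$ is at most the rank of $u$ in $U$ for all $u\in T$ (rank 1 = largest). The claim says removing $T$ from $U$ and $X$ from $W$ leaves a witness. *)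

theory Defs
  imports Complex_Main
begin

text \<open>Lists are used with 1-based positions, as in the paper: entry r of xs is xs ! (r - 1).\<close>

definition val1 :: "real list \<Rightarrow> nat \<Rightarrow> real" where
  "val1 xs r = (if 1 \<le> r \<and> r \<le> length xs then xs ! (r - 1) else 0)"

definition delete_pos :: "real list \<Rightarrow> nat set \<Rightarrow> real list" where
  "delete_pos xs P = rev (sort [xs ! (i - 1). i \<leftarrow> [1..<Suc (length xs)], i \<notin> P])"

end

theory Submission
  imports Defs "HOL-Library.Multiset"
begin

text \<open>Let \<open>p\<close> be the position in \<open>u\<close> of the \<open>r\<close>-th surviving entry, so \<open>u'\<^sub>r = u\<^sub>p\<close> and
  exactly \<open>r - 1\<close> positions below \<open>p\<close> survive in \<open>u\<close>. Since \<open>f\<close> maps the deleted positions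
  below \<open>p\<close> injectively to deleted positions below \<open>p\<close>, at least as many positions below \<open>p\<close>
  are deleted from \<open>w\<close>, so at most \<open>r - 1\<close> survive there. Hence the \<open>r\<close>-th surviving position
  \<open>q\<close> of \<open>w\<close>, if any, satisfies \<open>p \<le> q\<close>, and \<open>w'\<^sub>r = w\<^sub>q \<le> w\<^sub>p \<le> u\<^sub>p = u'\<^sub>r\<close>; otherwise
  \<open>w'\<^sub>r = 0 \<le> u'\<^sub>r\<close>.\<close>

lemma card_less_nth_strict_sorted:
  fixes xs :: "'a::linorder list"
  assumes "sorted_wrt (<) xs" and "k < length xs"
  shows "card {y \<in> set xs. y < xs ! k} = k"
proof -
  have "{y \<in> set xs. y < xs ! k} = (!) xs ` {..<k}"
  proof (intro equalityI subsetI)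
    fix y assume "y \<in> {y \<in> set xs. y < xs ! k}"
    then obtain i where "i < length xs" "y = xs ! i" "xs ! i < xs ! k"
      by (auto simp: in_set_conv_nth)
    with assms have "i < k"
      by (metis linorder_neqE_nat order.asym sorted_wrt_iff_nth_less)
    with \<open>y = xs ! i\<close> show "y \<in> (!) xs ` {..<k}" by blast
  qed (use assms in \<open>auto simp: sorted_wrt_iff_nth_less\<close>)
  moreover have "inj_on ((!) xs) {..<k}"
    using assms strict_sorted_iff[of xs] by (auto simp: inj_on_def nth_eq_iff_index_eq)
  ultimately show ?thesis by (simp add: card_image)
qed

lemma nth_le_nth_if_card_less_le:
  fixes xs ys :: "'a::linorder list"
  assumes xs: "sorted_wrt (<) xs" and ys: "sorted_wrt (<) ys"
    and count: "\<And>p. p \<in> set xs \<Longrightarrow> card {y \<in> set ys. y < p} \<le> card {y \<in> set xs. y < p}"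
    and k: "k < length xs" "k < length ys"
  shows "xs ! k \<le> ys ! k"
proof (rule ccontr)
  assume "\<not> xs ! k \<le> ys ! k"
  then have "insert (ys ! k) {y \<in> set ys. y < ys ! k} \<subseteq> {y \<in> set ys. y < xs ! k}"
    using k by auto
  then have "card (insert (ys ! k) {y \<in> set ys. y < ys ! k}) \<le> card {y \<in> set ys. y < xs ! k}"
    by (intro card_mono) auto
  also have "\<dots> \<le> card {y \<in> set xs. y < xs ! k}"
    using count k by simp
  finally show False
    using card_less_nth_strict_sorted[OF xs k(1)] card_less_nth_strict_sorted[OF ys k(2)]
    by simp
qed

lemma card_Diff_le_card_Diff_if_inj_on:
  assumes "finite S" and "inj_on f (S \<inter> T)" and "f ` (S \<inter> T) \<subseteq> S \<inter> X"
  shows "card (S - X) \<le> card (S - T)"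
proof -
  have "card (S \<inter> T) \<le> card (S \<inter> X)"
    using assms by (intro card_inj_on_le) auto
  moreover have "card (S \<inter> X) \<le> card S" "card (S \<inter> T) \<le> card S"
    using assms(1) by (auto intro: card_mono)
  ultimately show ?thesis
    using assms(1) by (simp add: card_Diff_subset_Int)
qed

definition kept_positions :: "nat \<Rightarrow> nat set \<Rightarrow> nat list" where
  "kept_positions n P = filter (\<lambda>i. i \<notin> P) [1..<Suc n]"

lemma strict_sorted_kept_positions: "sorted_wrt (<) (kept_positions n P)"
  unfolding kept_positions_def by (intro sorted_wrt_filter sorted_wrt_upt)

lemma set_kept_positions: "set (kept_positions n P) = {1..n} - P"
  unfolding kept_positions_def by auto

lemma length_kept_positions:
  assumes "P \<subseteq> {1..n}"
  shows "length (kept_positions n P) = n - card P"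
proof -
  have "length (kept_positions n P) = card (set (kept_positions n P))"
    using strict_sorted_kept_positions strict_sorted_iff distinct_card by metis
  with assms show ?thesis
    by (simp add: set_kept_positions card_Diff_subset finite_subset)
qed

lemma rev_sort_if_sorted_desc:
  assumes "sorted_wrt (\<ge>) (xs :: 'a::linorder list)"
  shows "rev (sort xs) = xs"
proof -
  have "sorted (rev xs)" using assms by (simp add: sorted_wrt_rev)
  then have "sort xs = rev xs" by (intro properties_for_sort) auto
  then show ?thesis by simp
qed

lemma delete_pos_eq_map_kept_positions:
  assumes "sorted_wrt (\<ge>) xs"
  shows "delete_pos xs P = map (\<lambda>i. xs ! (i - 1)) (kept_positions (length xs) P)"
proof -
  have list_compr: "[g i. i \<leftarrow> L, Q i] = map g (filter Q L)" for g :: "nat \<Rightarrow> real" and Q L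
    by (induction L) auto
  have "xs ! (j - 1) \<le> xs ! (i - 1)" if "i \<in> {1..length xs}" "j \<in> {1..length xs}" "i < j"
    for i j
    using assms that by (auto simp: sorted_wrt_iff_nth_less)
  then have "sorted_wrt (\<lambda>i j. xs ! (j - 1) \<le> xs ! (i - 1)) (kept_positions (length xs) P)"
    by (intro sorted_wrt_mono_rel[OF _ strict_sorted_kept_positions])
      (auto simp: set_kept_positions)
  then have "sorted_wrt (\<ge>) (map (\<lambda>i. xs ! (i - 1)) (kept_positions (length xs) P))"
    by (simp add: sorted_wrt_map)
  then show ?thesis
    unfolding delete_pos_def list_compr kept_positions_def[symmetric]
    by (simp add: rev_sort_if_sorted_desc)
qed

lemma kept_positions_nth_le:
  assumes X: "X \<subseteq> {1..b}" and inj: "inj_on f T" and into: "f ` T \<subseteq> X"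
    and below: "\<forall>t\<in>T. f t \<le> t"
    and k: "k < length (kept_positions a T)" "k < length (kept_positions b X)"
  shows "kept_positions a T ! k \<le> kept_positions b X ! k"
proof (rule nth_le_nth_if_card_less_le[OF strict_sorted_kept_positions strict_sorted_kept_positions _ k])
  fix p assume "p \<in> set (kept_positions a T)"
  then have "p \<le> a" by (simp add: set_kept_positions)
  have "card {y \<in> set (kept_positions b X). y < p} \<le> card ({1..<p} - X)"
    by (intro card_mono) (auto simp: set_kept_positions)
  also have "\<dots> \<le> card ({1..<p} - T)"
  proof (rule card_Diff_le_card_Diff_if_inj_on)
    show "inj_on f ({1..<p} \<inter> T)" using inj by (rule inj_on_subset) auto
    show "f ` ({1..<p} \<inter> T) \<subseteq> {1..<p} \<inter> X" using X into below by fastforce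
  qed simp
  also have "{1..<p} - T = {y \<in> set (kept_positions a T). y < p}"
    using \<open>p \<le> a\<close> by (auto simp: set_kept_positions)
  finally show "card {y \<in> set (kept_positions b X). y < p}
      \<le> card {y \<in> set (kept_positions a T). y < p}" .
qed

lemma val1_delete_pos:
  assumes "sorted_wrt (\<ge>) xs" and "1 \<le> r" and "r - 1 < length (kept_positions (length xs) P)"
  shows "val1 (delete_pos xs P) r = val1 xs (kept_positions (length xs) P ! (r - 1))"
proof -
  have "kept_positions (length xs) P ! (r - 1) \<in> {1..length xs}"
    using assms(3) nth_mem set_kept_positions by blast
  with assms show ?thesis
    by (auto simp: val1_def delete_pos_eq_map_kept_positions)
qed

lemma val1_delete_pos_beyond:
  assumes "sorted_wrt (\<ge>) xs" and "length (kept_positions (length xs) P) < r"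
  shows "val1 (delete_pos xs P) r = 0"
  using assms by (simp add: val1_def delete_pos_eq_map_kept_positions)

lemma val1_nonneg: "\<forall>x\<in>set xs. x \<ge> 0 \<Longrightarrow> val1 xs r \<ge> 0"
  unfolding val1_def by (auto intro: nth_mem)

lemma val1_antimono:
  assumes "sorted_wrt (\<ge>) xs" and "\<forall>x\<in>set xs. x \<ge> 0" and "1 \<le> p" and "p \<le> q"
  shows "val1 xs q \<le> val1 xs p"
  using assms by (cases "p = q") (auto simp: val1_def sorted_wrt_iff_nth_less)

theorem proposition3p4:
  fixes u w :: "real list" and T X :: "nat set" and f :: "nat \<Rightarrow> nat"
  assumes u_sorted: "sorted_wrt (\<ge>) u" and u_nonneg: "\<forall>x\<in>set u. x \<ge> 0"
    and w_sorted: "sorted_wrt (\<ge>) w" and w_nonneg: "\<forall>x\<in>set w. x \<ge> 0"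
    and dom: "\<forall>r\<in>{1..length u}. val1 u r \<ge> val1 w r"
    and T_sub: "T \<subseteq> {1..length u}" and X_sub: "X \<subseteq> {1..length w}"
    and f_inj: "inj_on f T" and f_into: "f ` T \<subseteq> X"
    and f_le: "\<forall>t\<in>T. f t \<le> t"
  shows "\<forall>r\<in>{1..length u - card T}.
           val1 (delete_pos u T) r \<ge> val1 (delete_pos w X) r"
proof
  fix r assume r: "r \<in> {1..length u - card T}"
  define A where "A = kept_positions (length u) T"
  define B where "B = kept_positions (length w) X"
  define p where "p = A ! (r - 1)"
  have "r - 1 < length A"
    using r T_sub by (auto simp: A_def length_kept_positions)
  then have p: "p \<in> {1..length u}"
    using nth_mem set_kept_positions by (metis A_def DiffD1 p_def)
  have u'_r: "val1 (delete_pos u T) r = val1 u p"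
    using val1_delete_pos[OF u_sorted] r \<open>r - 1 < length A\<close> by (simp add: A_def p_def)
  show "val1 (delete_pos w X) r \<le> val1 (delete_pos u T) r"
  proof (cases "r - 1 < length B")
    case True
    have "p \<le> B ! (r - 1)"
      using kept_positions_nth_le[OF X_sub f_inj f_into f_le] \<open>r - 1 < length A\<close> True
      by (simp add: p_def A_def B_def)
    have "val1 (delete_pos w X) r = val1 w (B ! (r - 1))"
      using val1_delete_pos[OF w_sorted] r True by (simp add: B_def)
    also have "\<dots> \<le> val1 w p"
      using val1_antimono[OF w_sorted w_nonneg] p \<open>p \<le> B ! (r - 1)\<close> by simp
    also have "\<dots> \<le> val1 u p"
      using dom p by blast
    finally show ?thesis using u'_r by simp
  next
    case False
    with r have "length B < r" by auto
    then have "val1 (delete_pos w X) r = 0"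
      using val1_delete_pos_beyond[OF w_sorted] by (simp add: B_def)
    then show ?thesis using u'_r val1_nonneg[OF u_nonneg] by simp
  qed
qed

end
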